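(* For every coalition $C$ and every formula $\phi\in\Phi$, $\vdash \neg\mathsf{H}_C\phi\to\mathsf{K}_C\neg\mathsf{H}_C\phi$.
   Context: Fix a set of agents $\mathcal{A}$; a coalition is a subset of $\mathcal{A}$. The language $\Phi$: $\phi ::= p \mid \neg\phi \mid \phi\to\phi \mid \mathsf{K}_C\phi \mid \mathsf{H}_C\phi$ ($p$ propositional variable, $C\subseteq\mathcal{A}$). Axioms: propositional tautologies; Truth $\mathsf{K}_C\phi\to\phi$; Negative Introspection $\neg\mathsf{K}_C\phi\to\mathsf{K}_C\neg\mathsf{K}_C\phi$; Distributivity $\mathsf{K}_C(\phi\to\psi)\to(\mathsf{K}_C\phi\to\mathsf{K}_C\psi)$; Monotonicity $\mathsf{K}_C\phi\to\mathsf{K}_D\phi$ for $C\subseteq D$; Strategic Positive Introspection $\mathsf{H}_C\phi\to\mathsf{K}_C\mathsf{H}_C\phi$; Cooperation $\mathsf{H}_C(\phi\to\psi)\to(\mathsf{H}_D\phi\to\mathsf{H}_{C\cup D}\psi)$ for $C\cap D=\varnothing$; Empty Coalition $\mathsf{K}_\varnothing\phi\to\mathsf{H}_\varnothing\phi$; Perfect Recall $\mathsf{H}_D\phi\to\mathsf{H}_D\mathsf{K}_C\phi$ for $D\subseteq C\neq\varnothing$; Unachievability of Falsehood $\neg\mathsf{H}_C\bot$. Rules: Necessitation ($\phi/\mathsf{K}_C\phi$), Strategic Necessitation ($\phi/\mathsf{H}_C\phi$), Modus Ponens. $\vdash\phi$ means $\phi$ is derivable. *)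

theory Defs
  imports Main
begin

datatype ('a, 'p) fm =
    Var 'p
  | Neg "('a, 'p) fm"
  | Imp "('a, 'p) fm" "('a, 'p) fm"
  | K "'a set" "('a, 'p) fm"
  | H "'a set" "('a, 'p) fm"

definition Bot :: "('a, 'p) fm" where
  "Bot = Neg (Imp (Var undefined) (Var undefined))"

fun peval :: "(('a, 'p) fm \<Rightarrow> bool) \<Rightarrow> ('a, 'p) fm \<Rightarrow> bool" where
  "peval v (Var p) = v (Var p)"
| "peval v (Neg f) = (\<not> peval v f)"
| "peval v (Imp f g) = (peval v f \<longrightarrow> peval v g)"
| "peval v (K C f) = v (K C f)"
| "peval v (H C f) = v (H C f)"

definition tautology :: "('a, 'p) fm \<Rightarrow> bool" where
  "tautology f \<longleftrightarrow> (\<forall>v. peval v f)"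

inductive derivable :: "('a, 'p) fm \<Rightarrow> bool" ("\<turnstile> _" [40] 40) where
  Taut: "tautology f \<Longrightarrow> \<turnstile> f"
| Truth: "\<turnstile> Imp (K C f) f"
| NegIntro: "\<turnstile> Imp (Neg (K C f)) (K C (Neg (K C f)))"
| Distr: "\<turnstile> Imp (K C (Imp f g)) (Imp (K C f) (K C g))"
| Mono: "C \<subseteq> D \<Longrightarrow> \<turnstile> Imp (K C f) (K D f)"
| SPosIntro: "\<turnstile> Imp (H C f) (K C (H C f))"
| Coop: "C \<inter> D = {} \<Longrightarrow> \<turnstile> Imp (H C (Imp f g)) (Imp (H D f) (H (C \<union> D) g))"
| EmptyC: "\<turnstile> Imp (K {} f) (H {} f)"
| PerfRecall: "D \<subseteq> C \<Longrightarrow> C \<noteq> {} \<Longrightarrow> \<turnstile> Imp (H D f) (H D (K C f))"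
| Unach: "\<turnstile> Neg (H C Bot)"
| Nec: "\<turnstile> f \<Longrightarrow> \<turnstile> K C f"
| SNec: "\<turnstile> f \<Longrightarrow> \<turnstile> H C f"
| MP: "\<turnstile> f \<Longrightarrow> \<turnstile> Imp f g \<Longrightarrow> \<turnstile> g"

end

theory Submission
  imports Defs
begin

text \<open>By Strategic Positive Introspection, H_C phi implies K_C H_C phi. For any such
  self-knowing formula psi, the S5 axioms for K_C give the same for its negation:
  not psi yields not K_C psi (Truth), hence K_C not K_C psi (Negative Introspection), and
  contraposing psi \<longrightarrow> K_C psi under K_C turns this into K_C not psi.\<close>

lemma derivable_tautology_MP:
  assumes "tautology (Imp a b)" and "\<turnstile> a"
  shows "\<turnstile> b"
  using assms by (blast intro: derivable.Taut derivable.MP)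

lemma derivable_imp_trans [trans]:
  assumes "\<turnstile> Imp a b" and "\<turnstile> Imp b c"
  shows "\<turnstile> Imp a c"
proof -
  have "tautology (Imp (Imp a b) (Imp (Imp b c) (Imp a c)))"
    by (auto simp: tautology_def)
  then show ?thesis
    using assms by (blast intro: derivable.Taut derivable.MP)
qed

lemma derivable_contrapos:
  assumes "\<turnstile> Imp a b"
  shows "\<turnstile> Imp (Neg b) (Neg a)"
  by (rule derivable_tautology_MP[OF _ assms]) (auto simp: tautology_def)

lemma derivable_K_mono:
  assumes "\<turnstile> Imp a b"
  shows "\<turnstile> Imp (K C a) (K C b)"
  using Nec[OF assms] Distr by (rule MP)

lemma derivable_Neg_introspective:
  assumes pos: "\<turnstile> Imp \<psi> (K C \<psi>)"
  shows "\<turnstile> Imp (Neg \<psi>) (K C (Neg \<psi>))"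
proof -
  have "\<turnstile> Imp (Neg \<psi>) (Neg (K C \<psi>))"
    by (rule derivable_contrapos[OF Truth])
  also have "\<turnstile> Imp (Neg (K C \<psi>)) (K C (Neg (K C \<psi>)))"
    by (rule NegIntro)
  also have "\<turnstile> Imp (K C (Neg (K C \<psi>))) (K C (Neg \<psi>))"
    by (rule derivable_K_mono[OF derivable_contrapos[OF pos]])
  finally show ?thesis .
qed

theorem lemma7:
  fixes C :: "'a set" and \<phi> :: "('a, 'p) fm"
  shows "\<turnstile> Imp (Neg (H C \<phi>)) (K C (Neg (H C \<phi>)))"
  by (rule derivable_Neg_introspective[OF SPosIntro])

end
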